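(* Let $\ell,k,t$ be positive integers, let $\mathbb{F}$ be a finite field, and let $b$ be an integer with $b>\ell/k$. There is a $t$-private $k$-server linear HSS for $\mathsf{CONCAT}_\ell(\mathbb{F})$ in which every output share lies in $\mathbb{F}^b$ (hence with download rate $\ell/(kb)$) if and only if there is an $\mathbb{F}$-linear code $C\subseteq(\mathbb{F}^b)^k$ with rate at least $\ell/(kb)$ and distance at least $t+1$. Moreover, in the "if" direction, the HSS can be taken to use $t$-private $k$-party CNF sharing as its $\mathsf{Share}$ function and to have upload cost $k\ell\binom{k-1}{t}\log_2|\mathbb{F}|$.
   Context: A $k$-server HSS for a class $\mathcal{F}$ of functions $f:\mathcal{X}^m\to\mathcal{Y}$ is a triple $(\mathsf{Share},\mathsf{Eval},\mathsf{Rec})$: the randomized $\mathsf{Share}$ maps $x\in\mathcal{X}$ to input shares $(x^{(1)},\dots,x^{(k)})$, each of the $m$ inputs being shared independently; server $j$ computes the output share $y^{(j)}=\mathsf{Eval}(f,j,(x_1^{(j)},\dots,x_m^{(j)}))$; and $\mathsf{Rec}(y^{(1)},\dots,y^{(k)})$ must equal $f(x_1,\dots,x_m)$ with probability 1. It is $t$-private if for every $T\subseteq[k]$ with $|T|\le t$ and all $x,x'\in\mathcal{X}$ the distribution of $(x^{(j)})_{j\in T}$ is the same under $\mathsf{Share}(x)$ and $\mathsf{Share}(x')$. For an object $w$ in a finite domain $\mathcal W$, $|w|=\log_2|\mathcal W|$. Upload cost $=\sum_{i,j}|x_i^{(j)}|$; download cost $=\sum_j|y^{(j)}|$; download rate $=\log_2|\mathcal{Y}|/\text{download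 cost}$. The HSS is linear (over $\mathbb{F}$) if $\mathcal{X}=\mathbb{F}$, $\mathsf{Share}(x,\mathbf{r})$ is $\mathbb{F}$-linear in $x$ and a uniformly random vector $\mathbf{r}$ over $\mathbb{F}$, $\mathcal{Y}=\mathbb{F}^{b'}$, each output share lies in some $\mathbb{F}^{b_j}$, and $\mathsf{Rec}$ is $\mathbb{F}$-linear ($\mathsf{Eval}$ need not be linear). $\mathsf{CONCAT}_\ell(\mathcal{X})$ is the class consisting of the single identity function $\mathcal{X}^\ell\to\mathcal{X}^\ell$, with $m=\ell$ inputs each shared independently. The $t$-private $k$-party CNF sharing of $x\in\mathbb{F}$: choose uniformly random $x_T\in\mathbb{F}$ for each $T\subseteq[k]$ with $|T|=t$ subject to $\sum_T x_T=x$; party $j$ gets $(x_T)_{T:j\notin T}$. An $\mathbb{F}$-linear code $C\subseteq(\mathbb{F}^b)^k$ is an $\mathbb{F}$-subspace; rate $\dim_{\mathbb{F}}C/(bk)$; distance $\min_{c\ne c'\in C}|\{i: c_i\ne c'_i\}|$. *)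

theory Defs
  imports "HOL-Library.Function_Algebras" "HOL-Probability.Probability_Mass_Function"
begin

text \<open>Vectors in F^n are modelled as functions nat => F that vanish at indices >= n.\<close>
definition vecs :: "nat \<Rightarrow> (nat \<Rightarrow> 'f::zero) set" where
  "vecs n = {r. \<forall>q\<ge>n. r q = 0}"

text \<open>A linear sharing scheme for k parties: randomness r in F^nr; party j's input
  share is a vector in F^(a j), with coordinates sh j x r p for p < a j.\<close>
definition linear_share ::
  "nat \<Rightarrow> nat \<Rightarrow> (nat \<Rightarrow> nat) \<Rightarrow> (nat \<Rightarrow> 'f::field \<Rightarrow> (nat \<Rightarrow> 'f) \<Rightarrow> nat \<Rightarrow> 'f) \<Rightarrow> bool" where
  "linear_share k nr a sh \<longleftrightarrow>
     (\<forall>j<k. \<forall>p<a j. \<forall>c x x' r r'. r \<in> vecs nr \<longrightarrow> r' \<in> vecs nr \<longrightarrow>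
        sh j (c * x + x') (\<lambda>q. c * r q + r' q) p = c * sh j x r p + sh j x' r' p)"

definition share_view ::
  "(nat \<Rightarrow> nat) \<Rightarrow> (nat \<Rightarrow> 'f::zero \<Rightarrow> (nat \<Rightarrow> 'f) \<Rightarrow> nat \<Rightarrow> 'f) \<Rightarrow> nat \<Rightarrow> 'f \<Rightarrow> (nat \<Rightarrow> 'f) \<Rightarrow> nat \<Rightarrow> 'f" where
  "share_view a sh j x r = (\<lambda>p. if p < a j then sh j x r p else 0)"

definition t_private ::
  "nat \<Rightarrow> nat \<Rightarrow> nat \<Rightarrow> (nat \<Rightarrow> nat) \<Rightarrow> (nat \<Rightarrow> 'f::{field,finite} \<Rightarrow> (nat \<Rightarrow> 'f) \<Rightarrow> nat \<Rightarrow> 'f) \<Rightarrow> bool" where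
  "t_private k t nr a sh \<longleftrightarrow>
     (\<forall>T. T \<subseteq> {..<k} \<longrightarrow> card T \<le> t \<longrightarrow> (\<forall>x x'.
        map_pmf (\<lambda>r. \<lambda>j. if j \<in> T then share_view a sh j x r else (\<lambda>_. 0)) (pmf_of_set (vecs nr)) =
        map_pmf (\<lambda>r. \<lambda>j. if j \<in> T then share_view a sh j x' r else (\<lambda>_. 0)) (pmf_of_set (vecs nr))))"

text \<open>Correctness for CONCAT_l: each of the l inputs x i is shared independently with
  randomness rs i; server j applies Eval (ev j) to its l input shares, obtaining an output
  share in F^b; the linear reconstruction with coefficients R (a linear map (F^b)^k -> F^l)
  returns (x 0, ..., x (l-1)) for every choice of inputs and randomness.\<close>
definition hss_concat_correct ::
  "nat \<Rightarrow> nat \<Rightarrow> nat \<Rightarrow> nat \<Rightarrow> (nat \<Rightarrow> nat) \<Rightarrow> (nat \<Rightarrow> 'f::field \<Rightarrow> (nat \<Rightarrow> 'f) \<Rightarrow> nat \<Rightarrow> 'f)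
   \<Rightarrow> (nat \<Rightarrow> (nat \<Rightarrow> nat \<Rightarrow> 'f) \<Rightarrow> nat \<Rightarrow> 'f) \<Rightarrow> (nat \<Rightarrow> nat \<Rightarrow> nat \<Rightarrow> 'f) \<Rightarrow> bool" where
  "hss_concat_correct l k b nr a sh ev R \<longleftrightarrow>
     (\<forall>x :: nat \<Rightarrow> 'f. \<forall>rs. (\<forall>i<l. rs i \<in> vecs nr) \<longrightarrow>
       (let inp = (\<lambda>j. \<lambda>i. if i < l then share_view a sh j (x i) (rs i) else (\<lambda>_. 0));
            y = (\<lambda>j. \<lambda>c. if c < b then ev j (inp j) c else 0)
        in \<forall>i<l. (\<Sum>j<k. \<Sum>c<b. R i j c * y j c) = x i))"

definition linear_HSS_concat ::
  "nat \<Rightarrow> nat \<Rightarrow> nat \<Rightarrow> nat \<Rightarrow> nat \<Rightarrow> (nat \<Rightarrow> nat) \<Rightarrow> (nat \<Rightarrow> 'f::{field,finite} \<Rightarrow> (nat \<Rightarrow> 'f) \<Rightarrow> nat \<Rightarrow> 'f)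
   \<Rightarrow> (nat \<Rightarrow> (nat \<Rightarrow> nat \<Rightarrow> 'f) \<Rightarrow> nat \<Rightarrow> 'f) \<Rightarrow> (nat \<Rightarrow> nat \<Rightarrow> nat \<Rightarrow> 'f) \<Rightarrow> bool" where
  "linear_HSS_concat l k t b nr a sh ev R \<longleftrightarrow>
     linear_share k nr a sh \<and> t_private k t nr a sh \<and> hss_concat_correct l k b nr a sh ev R"

definition upload_cost :: "'f::finite itself \<Rightarrow> nat \<Rightarrow> nat \<Rightarrow> (nat \<Rightarrow> nat) \<Rightarrow> real" where
  "upload_cost _ l k a = (\<Sum>i<l. \<Sum>j<k. log 2 (real (CARD('f) ^ a j)))"

text \<open>t-private k-party CNF sharing, w.r.t. an enumeration e of the N t-subsets of [k]:
  x_{e q} = r q for q < N-1 and x_{e (N-1)} = x - sum of the others (so the x_T are uniform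
  subject to summing to x); party j receives (x_T)_{j notin T}, listed in the order of e.\<close>
definition cnf_idx :: "nat \<Rightarrow> (nat \<Rightarrow> nat set) \<Rightarrow> nat \<Rightarrow> nat list" where
  "cnf_idx N e j = filter (\<lambda>q. j \<notin> e q) [0..<N]"

definition cnf_share :: "nat \<Rightarrow> (nat \<Rightarrow> nat set) \<Rightarrow> nat \<Rightarrow> 'f::field \<Rightarrow> (nat \<Rightarrow> 'f) \<Rightarrow> nat \<Rightarrow> 'f" where
  "cnf_share N e j x r p =
     (let xT = (\<lambda>q. if q < N - 1 then r q else x - (\<Sum>q'<N - 1. r q'))
      in if p < length (cnf_idx N e j) then xT (cnf_idx N e j ! p) else 0)"

text \<open>Codewords of (F^b)^k: functions c with c j p the p-th coordinate of block j.\<close>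
definition code_space :: "nat \<Rightarrow> nat \<Rightarrow> (nat \<Rightarrow> nat \<Rightarrow> 'f::zero) set" where
  "code_space k b = {c. \<forall>j p. (k \<le> j \<or> b \<le> p) \<longrightarrow> c j p = 0}"

definition fscale :: "'f::field \<Rightarrow> (nat \<Rightarrow> nat \<Rightarrow> 'f) \<Rightarrow> (nat \<Rightarrow> nat \<Rightarrow> 'f)" where
  "fscale c v = (\<lambda>j p. c * v j p)"

definition linear_code :: "nat \<Rightarrow> nat \<Rightarrow> (nat \<Rightarrow> nat \<Rightarrow> 'f::field) set \<Rightarrow> bool" where
  "linear_code k b C \<longleftrightarrow> C \<subseteq> code_space k b \<and> 0 \<in> C \<and>
     (\<forall>u\<in>C. \<forall>v\<in>C. u + v \<in> C) \<and> (\<forall>c. \<forall>u\<in>C. fscale c u \<in> C)"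

definition code_dim :: "(nat \<Rightarrow> nat \<Rightarrow> 'f::field) set \<Rightarrow> nat" where
  "code_dim C = vector_space.dim fscale C"

definition code_rate :: "nat \<Rightarrow> nat \<Rightarrow> (nat \<Rightarrow> nat \<Rightarrow> 'f::field) set \<Rightarrow> real" where
  "code_rate k b C = real (code_dim C) / real (b * k)"

definition code_dist_ge :: "nat \<Rightarrow> (nat \<Rightarrow> nat \<Rightarrow> 'f) set \<Rightarrow> nat \<Rightarrow> bool" where
  "code_dist_ge k C d \<longleftrightarrow>
     (\<forall>c\<in>C. \<forall>c'\<in>C. c \<noteq> c' \<longrightarrow> d \<le> card {j. j < k \<and> c j \<noteq> c' j})"

end

theory Submission
  imports Defs
begin

text \<open>
  Both sides are equivalent to the existence of an l \<times> kb reconstruction matrix R whose rows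
  remain linearly independent after the b columns of any t servers are erased.
  In a linear HSS for concatenation, t-privacy lets the randomness of the shares of x = e_i
  be chosen so that any t servers see exactly what they see for x = 0; so a combination
  z^T R that vanishes outside those servers, applied to the output shares, returns both
  z_i and 0. Conversely the row space of such an R is a code of dimension l whose nonzero
  words have weight > t, and l independent codewords of such a code form such an R.
  Given R, CNF sharing works: the piece x_T is known to every server outside T, and since
  the rows of R stay independent without the servers of T, these servers can jointly produce
  output shares that R reconstructs to x_T; the sum over all T reconstructs x.
\<close>

lemma sum_fun_apply: "sum f I x = (\<Sum>i\<in>I. f i x)"
  by (induction I rule: infinite_finite_induct) auto

lemma finite_vecs: "finite (vecs n :: (nat \<Rightarrow> 'f::{zero,finite}) set)"
proof -
  have "finite {r :: nat \<Rightarrow> 'f. \<forall>q. (q \<in> {..<n} \<longrightarrow> r q \<in> UNIV) \<and> (q \<notin> {..<n} \<longrightarrow> r q = 0)}"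
    by (rule finite_set_of_finite_funs) simp_all
  then show ?thesis by (simp add: vecs_def not_less)
qed

lemma zero_in_vecs [simp]: "(\<lambda>_. 0) \<in> vecs n"
  by (simp add: vecs_def)

section \<open>Solving linear systems with independent rows\<close>

definition rows_independent :: "nat \<Rightarrow> 'p set \<Rightarrow> (nat \<Rightarrow> 'p \<Rightarrow> 'f::field) \<Rightarrow> bool" where
  "rows_independent l P A \<longleftrightarrow> (\<forall>z. (\<forall>p\<in>P. (\<Sum>i<l. z i * A i p) = 0) \<longrightarrow> (\<forall>i<l. z i = 0))"

lemma rows_independent_pivot:
  fixes A :: "nat \<Rightarrow> 'p \<Rightarrow> 'f::field"
  assumes "rows_independent (Suc l) P A"
  obtains p where "p \<in> P" "A l p \<noteq> 0"
proof -
  let ?z = "\<lambda>i. if i = l then 1 else 0 :: 'f"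
  have "\<not> (\<forall>i<Suc l. ?z i = 0)" by simp
  then have "\<not> (\<forall>p\<in>P. (\<Sum>i<Suc l. ?z i * A i p) = 0)"
    using spec[OF assms[unfolded rows_independent_def], of ?z] by blast
  then show ?thesis using that by auto
qed

lemma rows_independent_eliminate:
  assumes "rows_independent (Suc l) P A"
  shows "rows_independent l P (\<lambda>i p. A i p - d i * A l p)"
  unfolding rows_independent_def
proof (rule allI, rule impI)
  fix z assume z: "\<forall>p\<in>P. (\<Sum>i<l. z i * (A i p - d i * A l p)) = 0"
  define z' where "z' i = (if i < l then z i else - (\<Sum>i<l. z i * d i))" for i
  have "(\<Sum>i<Suc l. z' i * A i p) = (\<Sum>i<l. z i * (A i p - d i * A l p))" for p
    by (simp add: z'_def right_diff_distrib sum_subtractf sum_distrib_right sum_distrib_left ac_simps)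
  then have "\<forall>i<Suc l. z' i = 0"
    using assms z unfolding rows_independent_def by simp
  then show "\<forall>i<l. z i = 0" by (metis less_SucI z'_def)
qed

lemma rows_independent_solvable:
  assumes "rows_independent l P A" and "finite P"
  shows "\<exists>y. \<forall>i<l. (\<Sum>p\<in>P. A i p * y p) = v i"
  using assms(1)
proof (induction l arbitrary: A v)
  case 0
  then show ?case by simp
next
  case (Suc l)
  txt \<open>Eliminate row l from the others with a pivot p0, solve the reduced system,
    then correct the solution at p0 to satisfy row l.\<close>
  obtain p0 where p0: "p0 \<in> P" "A l p0 \<noteq> 0" using rows_independent_pivot[OF Suc.prems] .
  define d where "d i = A i p0 / A l p0" for i
  obtain y where y: "\<forall>i<l. (\<Sum>p\<in>P. (A i p - d i * A l p) * y p) = v i - d i * v l"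
    using Suc.IH[OF rows_independent_eliminate[OF Suc.prems, of d], of "\<lambda>i. v i - d i * v l"] by blast
  define S where "S = (\<Sum>p\<in>P. A l p * y p)"
  define \<delta> where "\<delta> = (v l - S) / A l p0"
  define y' where "y' p = y p + (if p = p0 then \<delta> else 0)" for p
  have y': "(\<Sum>p\<in>P. A i p * y' p) = (\<Sum>p\<in>P. A i p * y p) + A i p0 * \<delta>" for i
    using p0(1) assms(2) by (simp add: y'_def distrib_left sum.distrib if_distrib[of "(*) _"] cong: if_cong)
  have "(\<Sum>p\<in>P. A i p * y' p) = v i" if "i < Suc l" for i
  proof (cases "i = l")
    case True
    then show ?thesis using p0(2) by (simp add: y' S_def[symmetric] \<delta>_def)
  next
    case False
    with that have "i < l" by simp
    have "(\<Sum>p\<in>P. A i p * y p) = (\<Sum>p\<in>P. (A i p - d i * A l p) * y p) + d i * S"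
      by (simp add: S_def algebra_simps sum_subtractf sum_distrib_left)
    also have "\<dots> = v i - d i * v l + d i * S" using y \<open>i < l\<close> by simp
    finally have reduced: "(\<Sum>p\<in>P. A i p * y p) = v i - d i * v l + d i * S" .
    have "A i p0 * \<delta> = d i * (v l - S)" using p0(2) by (simp add: d_def \<delta>_def)
    then show ?thesis unfolding y' reduced by (simp add: algebra_simps)
  qed
  then show ?case by blast
qed

context module
begin

lemma span_image_lessThan:
  fixes l :: nat
  shows "span (v ` {..<l}) = range (\<lambda>z. \<Sum>i<l. scale (z i) (v i))"
proof
  have "subspace (range (\<lambda>z. \<Sum>i<l. scale (z i) (v i)))"
    unfolding subspace_def
  proof (intro conjI ballI allI)
    show "0 \<in> range (\<lambda>z. \<Sum>i<l. scale (z i) (v i))"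
      by (rule range_eqI[where x="\<lambda>_. 0"]) simp
    fix x y assume "x \<in> range (\<lambda>z. \<Sum>i<l. scale (z i) (v i))" "y \<in> range (\<lambda>z. \<Sum>i<l. scale (z i) (v i))"
    then obtain zx zy where "x = (\<Sum>i<l. scale (zx i) (v i))" "y = (\<Sum>i<l. scale (zy i) (v i))" by blast
    then show "x + y \<in> range (\<lambda>z. \<Sum>i<l. scale (z i) (v i))"
      by (intro range_eqI[where x="\<lambda>i. zx i + zy i"]) (simp add: scale_left_distrib sum.distrib)
  next
    fix c x assume "x \<in> range (\<lambda>z. \<Sum>i<l. scale (z i) (v i))"
    then obtain zx where "x = (\<Sum>i<l. scale (zx i) (v i))" by blast
    then show "scale c x \<in> range (\<lambda>z. \<Sum>i<l. scale (z i) (v i))"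
      by (intro range_eqI[where x="\<lambda>i. c * zx i"]) (simp add: scale_sum_right)
  qed
  moreover have "v i \<in> range (\<lambda>z. \<Sum>i<l. scale (z i) (v i))" if "i < l" for i
    using that by (intro range_eqI[where x="\<lambda>m. if m = i then 1 else 0"]) (simp add: if_distrib[of "\<lambda>c. scale c _"] cong: if_cong)
  ultimately show "span (v ` {..<l}) \<subseteq> range (\<lambda>z. \<Sum>i<l. scale (z i) (v i))"
    by (intro span_minimal) auto
  show "range (\<lambda>z. \<Sum>i<l. scale (z i) (v i)) \<subseteq> span (v ` {..<l})"
  proof clarify
    fix z
    show "(\<Sum>i<l. scale (z i) (v i)) \<in> span (v ` {..<l})"
      by (rule span_sum, rule span_scale, rule span_base) simp
  qed
qed

end

context vector_space
begin

lemma independent_family_image: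
  fixes l :: nat
  assumes indep: "\<And>z. (\<Sum>i<l. scale (z i) (v i)) = 0 \<Longrightarrow> \<forall>i<l. z i = 0"
  shows "inj_on v {..<l}" and "independent (v ` {..<l})"
proof -
  show inj: "inj_on v {..<l}"
  proof (rule inj_onI, rule ccontr)
    fix i i' assume i: "i \<in> {..<l}" "i' \<in> {..<l}" and "v i = v i'" "i \<noteq> i'"
    let ?z = "\<lambda>m. (if m = i then 1 else 0) - (if m = i' then 1 else 0 :: 'a)"
    have "(\<Sum>m<l. scale (?z m) (v m)) = v i - v i'"
      using i by (simp add: scale_left_diff_distrib sum_subtractf if_distrib[of "\<lambda>c. scale c _"] sum.delta cong: if_cong)
    then have "(\<Sum>m<l. scale (?z m) (v m)) = 0" using \<open>v i = v i'\<close> by simp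
    then have "\<forall>m<l. ?z m = 0" by (rule indep[of ?z])
    then show False using i \<open>i \<noteq> i'\<close> by auto
  qed
  show "independent (v ` {..<l})"
  proof (rule independent_if_scalars_zero)
    fix f x assume sum0: "(\<Sum>x\<in>v ` {..<l}. scale (f x) x) = 0" and "x \<in> v ` {..<l}"
    then obtain i where "i < l" "x = v i" by auto
    have "(\<Sum>i<l. scale (f (v i)) (v i)) = 0" using sum0 by (simp add: sum.reindex[OF inj])
    then show "f x = 0" using indep[of "f \<circ> v"] \<open>i < l\<close> \<open>x = v i\<close> by auto
  qed simp
qed

lemma obtain_independent_family:
  fixes l :: nat
  assumes "l \<le> dim V"
  obtains v where "\<forall>i<l. v i \<in> V" and "\<And>z. (\<Sum>i<l. scale (z i) (v i)) = 0 \<Longrightarrow> \<forall>i<l. z i = 0"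
proof -
  obtain B where B: "B \<subseteq> V" "independent B" "card B = dim V" by (rule basis_exists)
  obtain B' where B': "B' \<subseteq> B" "card B' = l" "finite B'"
    using obtain_subset_with_card_n[of l B] assms B(3) by auto
  obtain g where g: "bij_betw g {..<l} B'"
    using ex_bij_betw_nat_finite[OF B'(3)] B'(2) by (auto simp: atLeast0LessThan)
  have indep: "independent B'" using independent_mono[OF B(2) B'(1)] .
  show ?thesis
  proof (rule that)
    show "\<forall>i<l. g i \<in> V" using g B'(1) B(1) by (auto simp: bij_betw_def)
  next
    fix z assume sum0: "(\<Sum>i<l. scale (z i) (g i)) = 0"
    let ?u = "\<lambda>x. z (inv_into {..<l} g x)"
    have "(\<Sum>x\<in>B'. scale (?u x) x) = (\<Sum>i<l. scale (?u (g i)) (g i))"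
      using sum.reindex_bij_betw[OF g, symmetric] .
    also have "\<dots> = (\<Sum>i<l. scale (z i) (g i))"
      using g by (intro sum.cong refl) (simp add: bij_betw_def inv_into_f_f)
    finally have "(\<Sum>x\<in>B'. scale (?u x) x) = 0" using sum0 by simp
    from independentD[OF indep B'(3) subset_refl this]
    show "\<forall>i<l. z i = 0"
      using g by (auto simp: bij_betw_def) (metis imageI inv_into_f_f lessThan_iff)
  qed
qed

end

section \<open>Linear codes\<close>

interpretation codewords: vector_space "fscale :: 'f::field \<Rightarrow> (nat \<Rightarrow> nat \<Rightarrow> 'f) \<Rightarrow> _"
  by unfold_locales (auto simp: fscale_def algebra_simps fun_eq_iff)

lemma linear_code_subspace: "linear_code k b C \<Longrightarrow> codewords.subspace C"
  by (simp add: linear_code_def codewords.subspace_def)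

lemma linear_code_dist_ge_iff:
  assumes "linear_code k b C"
  shows "code_dist_ge k C d \<longleftrightarrow> (\<forall>u\<in>C. u \<noteq> 0 \<longrightarrow> d \<le> card {j. j < k \<and> u j \<noteq> 0})"
proof
  assume "code_dist_ge k C d"
  then show "\<forall>u\<in>C. u \<noteq> 0 \<longrightarrow> d \<le> card {j. j < k \<and> u j \<noteq> 0}"
    using assms by (auto simp: code_dist_ge_def linear_code_def)
next
  assume weight: "\<forall>u\<in>C. u \<noteq> 0 \<longrightarrow> d \<le> card {j. j < k \<and> u j \<noteq> 0}"
  show "code_dist_ge k C d"
    unfolding code_dist_ge_def
  proof (intro ballI impI)
    fix c c' assume "c \<in> C" "c' \<in> C" "c \<noteq> c'"
    then have "c - c' \<in> C" "c - c' \<noteq> 0"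
      using codewords.subspace_diff[OF linear_code_subspace[OF assms]] by auto
    then have "d \<le> card {j. j < k \<and> (c - c') j \<noteq> 0}" using weight by blast
    then show "d \<le> card {j. j < k \<and> c j \<noteq> c' j}" by simp
  qed
qed

lemma code_rate_ge_imp_dim_ge:
  assumes "0 < b * k" and "real l / real (k * b) \<le> code_rate k b C"
  shows "l \<le> code_dim C"
  using assms by (simp add: code_rate_def mult.commute divide_le_cancel)

section \<open>Reconstruction matrices robust to erasures\<close>

definition erasure_independent :: "nat \<Rightarrow> nat \<Rightarrow> nat \<Rightarrow> nat \<Rightarrow> (nat \<Rightarrow> nat \<Rightarrow> nat \<Rightarrow> 'f::field) \<Rightarrow> bool" where
  "erasure_independent l k t b R \<longleftrightarrow>
     (\<forall>T. T \<subseteq> {..<k} \<longrightarrow> card T \<le> t \<longrightarrow> rows_independent l (({..<k} - T) \<times> {..<b}) (\<lambda>i (j, c). R i j c))"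

lemma erasure_independentI:
  assumes "\<And>T z i. T \<subseteq> {..<k} \<Longrightarrow> card T \<le> t \<Longrightarrow>
      (\<And>j c. j < k \<Longrightarrow> j \<notin> T \<Longrightarrow> c < b \<Longrightarrow> (\<Sum>i<l. z i * R i j c) = 0) \<Longrightarrow> i < l \<Longrightarrow> z i = 0"
  shows "erasure_independent l k t b R"
  using assms by (auto simp: erasure_independent_def rows_independent_def)

lemma erasure_independentD:
  assumes "erasure_independent l k t b R" "T \<subseteq> {..<k}" "card T \<le> t"
    and "\<And>j c. j < k \<Longrightarrow> j \<notin> T \<Longrightarrow> c < b \<Longrightarrow> (\<Sum>i<l. z i * R i j c) = 0" and "i < l"
  shows "z i = 0"
  using assms by (auto simp: erasure_independent_def rows_independent_def)

lemma erasure_independent_less: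
  fixes R :: "nat \<Rightarrow> nat \<Rightarrow> nat \<Rightarrow> 'f::field"
  assumes "erasure_independent l k t b R" and "0 < l"
  shows "t < k"
proof (rule ccontr)
  assume "\<not> t < k"
  then have "(1::'f) = 0"
    using erasure_independentD[OF assms(1), of "{..<k}" "\<lambda>_. 1" 0] assms(2) by auto
  then show False by simp
qed

lemma erasure_independent_solvable:
  assumes "erasure_independent l k t b R" "T \<subseteq> {..<k}" "card T \<le> t"
  shows "\<exists>Y. \<forall>i<l. (\<Sum>j<k. \<Sum>c<b. R i j c * (if j \<notin> T then Y j c else 0)) = v i"
proof -
  let ?P = "({..<k} - T) \<times> {..<b}"
  obtain y where y: "\<forall>i<l. (\<Sum>p\<in>?P. (\<lambda>(j, c). R i j c) p * y p) = v i"
    using rows_independent_solvable[of l ?P "\<lambda>i (j, c). R i j c" v] assms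
    by (auto simp: erasure_independent_def)
  have "(\<Sum>j<k. \<Sum>c<b. R i j c * (if j \<notin> T then y (j, c) else 0))
      = (\<Sum>p\<in>?P. (\<lambda>(j, c). R i j c) p * y p)" for i
  proof -
    have "(\<Sum>j<k. \<Sum>c<b. R i j c * (if j \<notin> T then y (j, c) else 0))
        = (\<Sum>j<k. if j \<notin> T then \<Sum>c<b. R i j c * y (j, c) else 0)"
      by (intro sum.cong) auto
    also have "\<dots> = (\<Sum>j\<in>{..<k} - T. \<Sum>c<b. R i j c * y (j, c))"
      by (simp add: sum.If_cases Diff_eq Compl_eq)
    finally show ?thesis by (simp add: sum.cartesian_product case_prod_beta)
  qed
  then show ?thesis using y by (intro exI[of _ "\<lambda>j c. y (j, c)"]) simp
qed

definition code_row :: "nat \<Rightarrow> nat \<Rightarrow> (nat \<Rightarrow> nat \<Rightarrow> nat \<Rightarrow> 'f::zero) \<Rightarrow> nat \<Rightarrow> nat \<Rightarrow> nat \<Rightarrow> 'f" where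
  "code_row k b R i = (\<lambda>j c. if j < k \<and> c < b then R i j c else 0)"

lemma sum_fscale_code_row:
  "(\<Sum>i<l. fscale (z i) (code_row k b R i)) j c = (if j < k \<and> c < b then \<Sum>i<l. z i * R i j c else 0)"
  by (auto simp: sum_fun_apply fscale_def code_row_def)

lemma erasure_independent_imp_code:
  fixes R :: "nat \<Rightarrow> nat \<Rightarrow> nat \<Rightarrow> 'f::field"
  assumes R: "erasure_independent l k t b R"
  shows "\<exists>C :: (nat \<Rightarrow> nat \<Rightarrow> 'f) set. linear_code k b C \<and> code_dim C = l \<and> code_dist_ge k C (t + 1)"
proof -
  let ?w = "code_row k b R"
  define C where "C = codewords.span (?w ` {..<l})"
  have C: "C = range (\<lambda>z. \<Sum>i<l. fscale (z i) (?w i))"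
    by (simp add: C_def codewords.span_image_lessThan)
  have coeffs_zero: "\<forall>i<l. z i = 0"
    if T: "T \<subseteq> {..<k}" "card T \<le> t"
      and vanish: "\<And>j. j < k \<Longrightarrow> j \<notin> T \<Longrightarrow> (\<Sum>i<l. fscale (z i) (?w i)) j = 0"
    for T z
  proof -
    have "(\<Sum>i<l. z i * R i j c) = 0" if "j < k" "j \<notin> T" "c < b" for j c
      using fun_cong[OF vanish[OF that(1,2)], of c] that by (simp add: sum_fscale_code_row)
    then show ?thesis using erasure_independentD[OF R T] by blast
  qed
  have indep: "\<And>z. (\<Sum>i<l. fscale (z i) (?w i)) = 0 \<Longrightarrow> \<forall>i<l. z i = 0"
    using coeffs_zero[of "{}"] by simp
  have lin: "linear_code k b C"
    unfolding linear_code_def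
  proof (intro conjI ballI allI)
    show "C \<subseteq> code_space k b"
      by (auto simp: C code_space_def sum_fscale_code_row)
  qed (simp_all add: C_def codewords.span_zero codewords.span_add codewords.span_scale)
  have "code_dim C = l"
    using codewords.independent_family_image[where l=l and v="?w", OF indep]
    by (simp add: code_dim_def C_def codewords.dim_eq_card_independent card_image)
  moreover have "code_dist_ge k C (t + 1)"
    unfolding linear_code_dist_ge_iff[OF lin]
  proof (intro ballI impI)
    fix u assume "u \<in> C" "u \<noteq> 0"
    then obtain z where u: "u = (\<Sum>i<l. fscale (z i) (?w i))" by (auto simp: C)
    let ?T = "{j. j < k \<and> u j \<noteq> 0}"
    show "t + 1 \<le> card ?T"
    proof (rule ccontr)
      assume "\<not> t + 1 \<le> card ?T"
      then have "\<forall>i<l. z i = 0" using u by (intro coeffs_zero[of ?T]) auto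
      then show False using \<open>u \<noteq> 0\<close> u by simp
    qed
  qed
  ultimately show ?thesis using lin by blast
qed

lemma linear_code_imp_erasure_independent:
  fixes C :: "(nat \<Rightarrow> nat \<Rightarrow> 'f::field) set"
  assumes lin: "linear_code k b C" and dist: "code_dist_ge k C (t + 1)" and "l \<le> code_dim C"
  shows "\<exists>R :: nat \<Rightarrow> nat \<Rightarrow> nat \<Rightarrow> 'f. erasure_independent l k t b R"
proof -
  obtain g where gC: "\<forall>i<l. g i \<in> C"
    and indep: "\<And>z. (\<Sum>i<l. fscale (z i) (g i)) = 0 \<Longrightarrow> \<forall>i<l. z i = 0"
    using codewords.obtain_independent_family assms(3) unfolding code_dim_def by blast
  have "erasure_independent l k t b g"
  proof (rule erasure_independentI)
    fix T z i
    assume T: "T \<subseteq> {..<k}" "card T \<le> t" and "i < l"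
      and vanish: "\<And>j c. j < k \<Longrightarrow> j \<notin> T \<Longrightarrow> c < b \<Longrightarrow> (\<Sum>i<l. z i * g i j c) = 0"
    define u where "u = (\<Sum>i<l. fscale (z i) (g i))"
    have "u \<in> C"
      unfolding u_def using gC linear_code_subspace[OF lin]
      by (intro codewords.subspace_sum codewords.subspace_scale) auto
    have "u j c = 0" if "j < k" "j \<notin> T" for j c
    proof (cases "c < b")
      case True
      then show ?thesis using vanish that by (simp add: u_def sum_fun_apply fscale_def)
    next
      case False
      then have "g i j c = 0" if "i < l" for i
        using gC lin that by (auto simp: linear_code_def code_space_def)
      then show ?thesis by (simp add: u_def sum_fun_apply fscale_def)
    qed
    then have "{j. j < k \<and> u j \<noteq> 0} \<subseteq> T" by auto
    then have "card {j. j < k \<and> u j \<noteq> 0} \<le> t"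
      using T by (meson card_mono finite_lessThan finite_subset order_trans)
    then have "u = 0"
      using \<open>u \<in> C\<close> dist unfolding linear_code_dist_ge_iff[OF lin] by force
    then show "z i = 0" using indep \<open>i < l\<close> by (simp add: u_def)
  qed
  then show ?thesis by blast
qed

section \<open>Reconstruction matrices of linear HSS\<close>

lemma t_private_obtain_randomness:
  fixes sh :: "nat \<Rightarrow> 'f::{field,finite} \<Rightarrow> (nat \<Rightarrow> 'f) \<Rightarrow> nat \<Rightarrow> 'f"
  assumes "t_private k t nr a sh" "T \<subseteq> {..<k}" "card T \<le> t"
  obtains r where "r \<in> vecs nr" "\<And>j. j \<in> T \<Longrightarrow> share_view a sh j x r = share_view a sh j x' (\<lambda>_. 0)"
proof -
  define view where "view y r = (\<lambda>j. if j \<in> T then share_view a sh j y r else (\<lambda>_. 0))" for y r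
  have "map_pmf (view x) (pmf_of_set (vecs nr)) = map_pmf (view x') (pmf_of_set (vecs nr))"
    using assms unfolding t_private_def view_def by blast
  moreover have "finite (vecs nr :: (nat \<Rightarrow> 'f) set)" "vecs nr \<noteq> ({} :: (nat \<Rightarrow> 'f) set)"
    using finite_vecs zero_in_vecs by blast+
  ultimately have "view x ` vecs nr = view x' ` vecs nr"
    by (metis set_map_pmf set_pmf_of_set)
  then have "view x' (\<lambda>_. 0) \<in> view x ` vecs nr" by auto
  then obtain r where "r \<in> vecs nr" "view x r = view x' (\<lambda>_. 0)" by auto
  then show ?thesis using that by (metis view_def)
qed

lemma hss_concat_correct_combination_eq:
  fixes R :: "nat \<Rightarrow> nat \<Rightarrow> nat \<Rightarrow> 'f::field"
  assumes corr: "hss_concat_correct l k b nr a sh ev R"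
    and vanish: "\<And>j c. j < k \<Longrightarrow> j \<notin> T \<Longrightarrow> c < b \<Longrightarrow> (\<Sum>i<l. z i * R i j c) = 0"
    and rs: "\<forall>i<l. rs i \<in> vecs nr" and rs': "\<forall>i<l. rs' i \<in> vecs nr"
    and views: "\<And>j i. j \<in> T \<Longrightarrow> i < l \<Longrightarrow> share_view a sh j (x i) (rs i) = share_view a sh j (x' i) (rs' i)"
  shows "(\<Sum>i<l. z i * x i) = (\<Sum>i<l. z i * x' i)"
proof -
  define Y where "Y x rs j = (\<lambda>c. if c < b then ev j (\<lambda>i. if i < l then share_view a sh j (x i) (rs i) else (\<lambda>_. 0)) c else 0)"
    for x rs j
  have combination: "(\<Sum>i<l. z i * x i) = (\<Sum>j<k. \<Sum>c<b. (\<Sum>i<l. z i * R i j c) * Y x rs j c)"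
    if "\<forall>i<l. rs i \<in> vecs nr" for x rs
  proof -
    have "\<forall>i<l. (\<Sum>j<k. \<Sum>c<b. R i j c * Y x rs j c) = x i"
      using corr that unfolding hss_concat_correct_def Let_def Y_def by blast
    then have "(\<Sum>i<l. z i * x i) = (\<Sum>i<l. z i * (\<Sum>j<k. \<Sum>c<b. R i j c * Y x rs j c))"
      by simp
    also have "\<dots> = (\<Sum>i<l. \<Sum>j<k. \<Sum>c<b. z i * R i j c * Y x rs j c)"
      by (simp add: sum_distrib_left mult.assoc)
    also have "\<dots> = (\<Sum>j<k. \<Sum>c<b. \<Sum>i<l. z i * R i j c * Y x rs j c)"
      by (subst sum.swap) (rule sum.cong[OF refl], rule sum.swap)
    finally show ?thesis by (simp add: sum_distrib_right)
  qed
  have same_outputs: "Y x rs j = Y x' rs' j" if "j \<in> T" for j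
  proof -
    have "(\<lambda>i. if i < l then share_view a sh j (x i) (rs i) else (\<lambda>_. 0))
        = (\<lambda>i. if i < l then share_view a sh j (x' i) (rs' i) else (\<lambda>_. 0))"
      using views[OF that] by auto
    then have "ev j (\<lambda>i. if i < l then share_view a sh j (x i) (rs i) else (\<lambda>_. 0))
        = ev j (\<lambda>i. if i < l then share_view a sh j (x' i) (rs' i) else (\<lambda>_. 0))"
      by (rule arg_cong)
    then show ?thesis by (simp only: Y_def)
  qed
  have "(\<Sum>i<l. z i * x i) = (\<Sum>j<k. \<Sum>c<b. (\<Sum>i<l. z i * R i j c) * Y x rs j c)"
    by (rule combination[OF rs])
  also have "\<dots> = (\<Sum>j<k. \<Sum>c<b. (\<Sum>i<l. z i * R i j c) * Y x' rs' j c)"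
  proof (intro sum.cong refl)
    fix j c assume "j \<in> {..<k}" "c \<in> {..<b}"
    then show "(\<Sum>i<l. z i * R i j c) * Y x rs j c = (\<Sum>i<l. z i * R i j c) * Y x' rs' j c"
      using vanish same_outputs by (cases "j \<in> T") auto
  qed
  also have "\<dots> = (\<Sum>i<l. z i * x' i)"
    by (rule combination[OF rs', symmetric])
  finally show ?thesis .
qed

lemma hss_imp_erasure_independent:
  fixes sh :: "nat \<Rightarrow> 'f::{field,finite} \<Rightarrow> (nat \<Rightarrow> 'f) \<Rightarrow> nat \<Rightarrow> 'f"
  assumes priv: "t_private k t nr a sh" and corr: "hss_concat_correct l k b nr a sh ev R"
  shows "erasure_independent l k t b R"
proof (rule erasure_independentI)
  fix T z i0
  assume T: "T \<subseteq> {..<k}" "card T \<le> t" and i0: "i0 < l"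
    and vanish: "\<And>j c. j < k \<Longrightarrow> j \<notin> T \<Longrightarrow> c < b \<Longrightarrow> (\<Sum>i<l. z i * R i j c) = 0"
  obtain r where r: "r \<in> vecs nr" "\<And>j. j \<in> T \<Longrightarrow> share_view a sh j 1 r = share_view a sh j 0 (\<lambda>_. 0)"
    using t_private_obtain_randomness[OF priv T, where x=1 and x'=0] by blast
  txt \<open>Sharing the unit vector at i0 with randomness r looks to T like sharing 0.\<close>
  let ?x = "\<lambda>i. if i = i0 then 1 else 0 :: 'f" and ?rs = "\<lambda>i. if i = i0 then r else (\<lambda>_. 0)"
  have views: "share_view a sh j (?x i) (?rs i) = share_view a sh j 0 (\<lambda>_. 0)" if "j \<in> T" for j i
    using r(2)[OF that] by simp
  have "(\<Sum>i<l. z i * ?x i) = (\<Sum>i<l. z i * 0)"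
    by (rule hss_concat_correct_combination_eq[OF corr vanish _ _ views]) (use r(1) in auto)
  then show "z i0 = 0" using i0 by (simp add: if_distrib[of "\<lambda>x. _ * x"] cong: if_cong)
qed

section \<open>HSS from CNF sharing\<close>

definition cnf_piece :: "nat \<Rightarrow> 'f::ab_group_add \<Rightarrow> (nat \<Rightarrow> 'f) \<Rightarrow> nat \<Rightarrow> 'f" where
  "cnf_piece N x r q = (if q < N - 1 then r q else x - (\<Sum>q'<N - 1. r q'))"

lemma cnf_share_eq:
  "cnf_share N e j x r p = (if p < length (cnf_idx N e j) then cnf_piece N x r (cnf_idx N e j ! p) else 0)"
  by (simp add: cnf_share_def cnf_piece_def)

lemma set_cnf_idx: "set (cnf_idx N e j) = {q. q < N \<and> j \<notin> e q}"
  by (auto simp: cnf_idx_def)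

lemma distinct_cnf_idx: "distinct (cnf_idx N e j)"
  by (simp add: cnf_idx_def)

lemma sum_cnf_piece: "0 < N \<Longrightarrow> (\<Sum>q<N. cnf_piece N x r q) = x"
  by (cases N) (simp_all add: cnf_piece_def)

lemma cnf_share_linear: "linear_share k (N - 1) a (cnf_share N e)"
  unfolding linear_share_def
  by (simp add: cnf_share_def Let_def sum.distrib sum_distrib_left algebra_simps)

lemma cnf_share_cong:
  assumes "\<And>q. q < N \<Longrightarrow> j \<notin> e q \<Longrightarrow> cnf_piece N x r q = cnf_piece N x' r' q"
  shows "cnf_share N e j x r = cnf_share N e j x' r'"
proof
  fix p
  have "cnf_idx N e j ! p \<in> {q. q < N \<and> j \<notin> e q}" if "p < length (cnf_idx N e j)"
    using nth_mem[OF that] by (simp add: set_cnf_idx)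
  then show "cnf_share N e j x r p = cnf_share N e j x' r' p"
    using assms by (simp add: cnf_share_eq)
qed

lemma cnf_exists_superset:
  assumes e: "bij_betw e {0..<N} {T. T \<subseteq> {..<k} \<and> card T = t}"
    and "t \<le> k" "T \<subseteq> {..<k}" "card T \<le> t"
  obtains q where "q < N" "T \<subseteq> e q"
proof -
  have "card ({..<k} - T) = k - card T"
    using assms(3) by (simp add: card_Diff_subset finite_subset)
  then have "t - card T \<le> card ({..<k} - T)" using assms(2) by simp
  then obtain E where E: "E \<subseteq> {..<k} - T" "card E = t - card T" "finite E"
    by (rule obtain_subset_with_card_n)
  have "finite T" using assms(3) finite_subset by blast
  then have "card (T \<union> E) = t" using E assms(4) by (subst card_Un_disjoint) auto
  moreover have "T \<union> E \<subseteq> {..<k}" using E assms(3) by auto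
  ultimately have "T \<union> E \<in> e ` {0..<N}" using e by (auto simp: bij_betw_def)
  then obtain q where "q < N" "T \<union> E = e q" by auto
  then show ?thesis using that[of q] by blast
qed

lemma map_pmf_vecs_translate:
  fixes d :: "'f::{ab_group_add,finite}"
  assumes "q0 < n"
  shows "map_pmf (\<lambda>r q. r q + (if q = q0 then d else 0)) (pmf_of_set (vecs n)) = pmf_of_set (vecs n)"
proof -
  let ?\<tau> = "\<lambda>r q. r q + (if q = q0 then d else 0)"
  have "inj_on ?\<tau> (vecs n)" by (rule inj_onI) (auto simp: fun_eq_iff)
  moreover have "?\<tau> ` vecs n = vecs n"
  proof
    show "?\<tau> ` vecs n \<subseteq> vecs n" using assms by (auto simp: vecs_def)
    show "vecs n \<subseteq> ?\<tau> ` vecs n"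
    proof
      fix r :: "nat \<Rightarrow> 'f" assume r: "r \<in> vecs n"
      have "(\<lambda>q. r q - (if q = q0 then d else 0)) \<in> vecs n" using r assms by (auto simp: vecs_def)
      then show "r \<in> ?\<tau> ` vecs n" by (intro image_eqI[where x="\<lambda>q. r q - (if q = q0 then d else 0)"]) auto
    qed
  qed
  moreover have "vecs n \<noteq> ({} :: (nat \<Rightarrow> 'f) set)" using zero_in_vecs by blast
  moreover have "finite (vecs n :: (nat \<Rightarrow> 'f) set)" by (rule finite_vecs)
  ultimately show ?thesis using map_pmf_of_set_inj[of ?\<tau> "vecs n"] by simp
qed

lemma cnf_share_private:
  fixes a :: "nat \<Rightarrow> nat"
  assumes e: "bij_betw e {0..<N} {T. T \<subseteq> {..<k} \<and> card T = t}" and "t \<le> k"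
  shows "t_private k t (N - 1) a (cnf_share N e :: nat \<Rightarrow> 'f::{field,finite} \<Rightarrow> _)"
  unfolding t_private_def
proof (intro allI impI)
  fix T and x x' :: 'f
  assume T: "T \<subseteq> {..<k}" "card T \<le> t"
  obtain q0 where q0: "q0 < N" "T \<subseteq> e q0" using cnf_exists_superset[OF e \<open>t \<le> k\<close> T] .
  define view where "view y r = (\<lambda>j. if j \<in> T then share_view a (cnf_share N e) j y r else (\<lambda>_. 0))"
    for y :: 'f and r
  txt \<open>No party of T holds the piece q0, so only that piece may depend on the secret.\<close>
  have view_eq: "view y r = view y' r'"
    if pieces: "\<And>q. q < N \<Longrightarrow> q \<noteq> q0 \<Longrightarrow> cnf_piece N y r q = cnf_piece N y' r' q" for y y' r r'
  proof -
    have "cnf_share N e j y r = cnf_share N e j y' r'" if "j \<in> T" for j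
      using that q0(2) by (intro cnf_share_cong pieces) auto
    then show ?thesis by (simp add: view_def share_view_def fun_eq_iff)
  qed
  show "map_pmf (view x) (pmf_of_set (vecs (N - 1))) = map_pmf (view x') (pmf_of_set (vecs (N - 1)))"
  proof (cases "q0 < N - 1")
    case True
    define \<tau> where "\<tau> r q = r q + (if q = q0 then x - x' else 0)" for r :: "nat \<Rightarrow> 'f" and q
    have "(\<Sum>q<N - 1. \<tau> r q) = (\<Sum>q<N - 1. r q) + (x - x')" for r
      using True by (simp add: \<tau>_def sum.distrib)
    then have shifted: "view x (\<tau> r) = view x' r" for r
      by (intro view_eq) (auto simp: cnf_piece_def \<tau>_def)
    have uniform: "map_pmf \<tau> (pmf_of_set (vecs (N - 1))) = pmf_of_set (vecs (N - 1))"
      using map_pmf_vecs_translate[OF True] unfolding \<tau>_def[abs_def] .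
    have "map_pmf (view x) (pmf_of_set (vecs (N - 1)))
        = map_pmf (view x) (map_pmf \<tau> (pmf_of_set (vecs (N - 1))))"
      by (simp only: uniform)
    also have "\<dots> = map_pmf (view x') (pmf_of_set (vecs (N - 1)))"
      by (simp add: map_pmf_comp shifted)
    finally show ?thesis .
  next
    case False
    then have "view x r = view x' r" for r
      using q0(1) by (intro view_eq) (auto simp: cnf_piece_def)
    then have "view x = view x'" ..
    then show ?thesis by simp
  qed
qed

lemma hss_concat_correctI:
  assumes "\<And>x rs i. \<forall>i<l. rs i \<in> vecs nr \<Longrightarrow> i < l \<Longrightarrow>
    (\<Sum>j<k. \<Sum>c<b. R i j c * ev j (\<lambda>i. if i < l then share_view a sh j (x i) (rs i) else (\<lambda>_. 0)) c) = x i"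
  shows "hss_concat_correct l k b nr a sh ev R"
  using assms by (simp add: hss_concat_correct_def)

lemma sum_cnf_idx:
  "(\<Sum>p<length (cnf_idx N e j). f (cnf_idx N e j ! p)) = (\<Sum>q<N. if j \<notin> e q then f q else 0)"
proof -
  have "(\<Sum>p<length (cnf_idx N e j). f (cnf_idx N e j ! p)) = sum_list (map f (cnf_idx N e j))"
    by (simp add: sum_list_sum_nth atLeast0LessThan)
  also have "\<dots> = (\<Sum>q\<in>{q. q < N \<and> j \<notin> e q}. f q)"
    by (simp add: sum_list_distinct_conv_sum_set distinct_cnf_idx set_cnf_idx)
  also have "\<dots> = (\<Sum>q<N. if j \<notin> e q then f q else 0)"
    by (simp add: sum.If_cases lessThan_def Collect_conj_eq)
  finally show ?thesis .
qed

text \<open>Server j adds up, over the pieces q it holds, its block of a solution sol q of the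
  system that reconstructs the vector of q-th pieces using only the servers outside e q.\<close>
definition cnf_eval ::
  "nat \<Rightarrow> nat \<Rightarrow> (nat \<Rightarrow> nat set) \<Rightarrow> (nat \<Rightarrow> (nat \<Rightarrow> 'f::comm_monoid_add) \<Rightarrow> nat \<Rightarrow> nat \<Rightarrow> 'f)
   \<Rightarrow> nat \<Rightarrow> (nat \<Rightarrow> nat \<Rightarrow> 'f) \<Rightarrow> nat \<Rightarrow> 'f" where
  "cnf_eval l N e sol j inp c =
     (\<Sum>p<length (cnf_idx N e j). sol (cnf_idx N e j ! p) (\<lambda>i. if i < l then inp i p else 0) j c)"

lemma cnf_eval_cnf_share:
  assumes "j < k" and a: "\<forall>j<k. a j = length (cnf_idx N e j)"
  shows "cnf_eval l N e sol j (\<lambda>i. if i < l then share_view a (cnf_share N e) j (x i) (rs i) else (\<lambda>_. 0)) c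
       = (\<Sum>q<N. if j \<notin> e q then sol q (\<lambda>i. if i < l then cnf_piece N (x i) (rs i) q else 0) j c else 0)"
proof -
  have inputs: "(\<lambda>i. if i < l then (if i < l then share_view a (cnf_share N e) j (x i) (rs i) else (\<lambda>_. 0)) p else 0)
      = (\<lambda>i. if i < l then cnf_piece N (x i) (rs i) (cnf_idx N e j ! p) else 0)"
    if "p < length (cnf_idx N e j)" for p
    using that assms by (auto simp: share_view_def cnf_share_eq)
  have "cnf_eval l N e sol j (\<lambda>i. if i < l then share_view a (cnf_share N e) j (x i) (rs i) else (\<lambda>_. 0)) c
      = (\<Sum>p<length (cnf_idx N e j).
           sol (cnf_idx N e j ! p) (\<lambda>i. if i < l then cnf_piece N (x i) (rs i) (cnf_idx N e j ! p) else 0) j c)"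
    unfolding cnf_eval_def by (intro sum.cong refl) (simp add: inputs)
  also have "\<dots> = (\<Sum>q<N. if j \<notin> e q then sol q (\<lambda>i. if i < l then cnf_piece N (x i) (rs i) q else 0) j c else 0)"
    by (rule sum_cnf_idx)
  finally show ?thesis .
qed

lemma cnf_share_correct:
  fixes R :: "nat \<Rightarrow> nat \<Rightarrow> nat \<Rightarrow> 'f::field"
  assumes sol: "\<And>q v. q < N \<Longrightarrow> \<forall>i<l. (\<Sum>j<k. \<Sum>c<b. R i j c * (if j \<notin> e q then sol q v j c else 0)) = v i"
    and "0 < N" and a: "\<forall>j<k. a j = length (cnf_idx N e j)"
  shows "hss_concat_correct l k b (N - 1) a (cnf_share N e) (cnf_eval l N e sol) R"
proof (rule hss_concat_correctI)
  fix x :: "nat \<Rightarrow> 'f" and rs :: "nat \<Rightarrow> nat \<Rightarrow> 'f" and i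
  assume "i < l"
  define W where "W q = (\<lambda>i. if i < l then cnf_piece N (x i) (rs i) q else 0)" for q
  have "(\<Sum>j<k. \<Sum>c<b. R i j c *
          cnf_eval l N e sol j (\<lambda>i. if i < l then share_view a (cnf_share N e) j (x i) (rs i) else (\<lambda>_. 0)) c)
      = (\<Sum>j<k. \<Sum>c<b. \<Sum>q<N. R i j c * (if j \<notin> e q then sol q (W q) j c else 0))"
    unfolding W_def by (intro sum.cong refl) (simp add: cnf_eval_cnf_share[OF _ a] sum_distrib_left)
  also have "\<dots> = (\<Sum>j<k. \<Sum>q<N. \<Sum>c<b. R i j c * (if j \<notin> e q then sol q (W q) j c else 0))"
    by (rule sum.cong[OF refl], rule sum.swap)
  also have "\<dots> = (\<Sum>q<N. \<Sum>j<k. \<Sum>c<b. R i j c * (if j \<notin> e q then sol q (W q) j c else 0))"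
    by (rule sum.swap)
  also have "\<dots> = (\<Sum>q<N. W q i)"
  proof (rule sum.cong[OF refl])
    fix q assume "q \<in> {..<N}"
    then show "(\<Sum>j<k. \<Sum>c<b. R i j c * (if j \<notin> e q then sol q (W q) j c else 0)) = W q i"
      using sol[of q "W q"] \<open>i < l\<close> by blast
  qed
  also have "\<dots> = x i"
    using \<open>i < l\<close> \<open>0 < N\<close> by (simp add: W_def sum_cnf_piece)
  finally show "(\<Sum>j<k. \<Sum>c<b. R i j c *
          cnf_eval l N e sol j (\<lambda>i. if i < l then share_view a (cnf_share N e) j (x i) (rs i) else (\<lambda>_. 0)) c) = x i" .
qed

lemma length_cnf_idx:
  assumes e: "bij_betw e {0..<N} {T. T \<subseteq> {..<k} \<and> card T = t}" and "j < k"
  shows "length (cnf_idx N e j) = (k - 1) choose t"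
proof -
  have "length (cnf_idx N e j) = card {q. q < N \<and> j \<notin> e q}"
    using distinct_card[OF distinct_cnf_idx] by (simp add: set_cnf_idx)
  also have "\<dots> = card (e ` {q. q < N \<and> j \<notin> e q})"
    by (intro card_image[symmetric] inj_on_subset[OF bij_betw_imp_inj_on[OF e]]) auto
  also have "e ` {q. q < N \<and> j \<notin> e q} = {T. T \<subseteq> {..<k} - {j} \<and> card T = t}"
  proof
    show "e ` {q. q < N \<and> j \<notin> e q} \<subseteq> {T. T \<subseteq> {..<k} - {j} \<and> card T = t}"
      using e by (auto simp: bij_betw_def)
    show "{T. T \<subseteq> {..<k} - {j} \<and> card T = t} \<subseteq> e ` {q. q < N \<and> j \<notin> e q}"
    proof
      fix T assume T: "T \<in> {T. T \<subseteq> {..<k} - {j} \<and> card T = t}"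
      then have "T \<in> e ` {0..<N}" using e by (auto simp: bij_betw_def)
      then obtain q where "q < N" "T = e q" by auto
      then show "T \<in> e ` {q. q < N \<and> j \<notin> e q}" using T by auto
    qed
  qed
  also have "card \<dots> = card ({..<k} - {j}) choose t"
    by (rule n_subsets) simp
  finally show ?thesis using \<open>j < k\<close> by simp
qed

lemma upload_cost_cnf:
  assumes e: "bij_betw e {0..<N} {T. T \<subseteq> {..<k} \<and> card T = t}"
    and a: "\<forall>j<k. a j = length (cnf_idx N e j)"
  shows "upload_cost TYPE('f::finite) l k a = real k * real l * real ((k - 1) choose t) * log 2 (real CARD('f))"
proof -
  have "log 2 (real (CARD('f) ^ a j)) = real ((k - 1) choose t) * log 2 (real CARD('f))" if "j < k" for j
    using a length_cnf_idx[OF e that] that by (simp add: log_nat_power)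
  then show ?thesis by (simp add: upload_cost_def)
qed

lemma erasure_independent_imp_cnf_hss:
  fixes R :: "nat \<Rightarrow> nat \<Rightarrow> nat \<Rightarrow> 'f::{field,finite}"
  assumes R: "erasure_independent l k t b R" and "0 < l"
  shows "\<exists>N e a ev. bij_betw e {0..<N} {T. T \<subseteq> {..<k} \<and> card T = t}
           \<and> (\<forall>j<k. a j = length (cnf_idx N e j))
           \<and> linear_HSS_concat l k t b (N - 1) a (cnf_share N e) ev R
           \<and> upload_cost TYPE('f) l k a = real k * real l * real ((k - 1) choose t) * log 2 (real CARD('f))"
proof -
  let ?S = "{T. T \<subseteq> {..<k} \<and> card T = t}"
  have "t < k" using erasure_independent_less[OF R \<open>0 < l\<close>] .
  have "finite ?S" by (rule finite_subset[of _ "Pow {..<k}"]) auto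
  then obtain N :: nat and e where e: "bij_betw e {0..<N} ?S" using ex_bij_betw_nat_finite by blast
  have "N = card ?S" using bij_betw_same_card[OF e] by simp
  moreover have "{..<t} \<in> ?S" using \<open>t < k\<close> by simp
  ultimately have "0 < N" using \<open>finite ?S\<close> card_gt_0_iff by blast
  define sol where
    "sol q v = (SOME Y. \<forall>i<l. (\<Sum>j<k. \<Sum>c<b. R i j c * (if j \<notin> e q then Y j c else 0)) = v i)" for q v
  have sol: "\<forall>i<l. (\<Sum>j<k. \<Sum>c<b. R i j c * (if j \<notin> e q then sol q v j c else 0)) = v i"
    if "q < N" for q v
  proof -
    have "e q \<in> ?S" using that by (intro bij_betw_apply[OF e]) simp
    then have "e q \<subseteq> {..<k}" "card (e q) \<le> t" by simp_all
    then show ?thesis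
      unfolding sol_def by (rule someI_ex[OF erasure_independent_solvable[OF R]])
  qed
  define a where "a j = length (cnf_idx N e j)" for j
  then have a: "\<forall>j<k. a j = length (cnf_idx N e j)" by simp
  have "linear_HSS_concat l k t b (N - 1) a (cnf_share N e) (cnf_eval l N e sol) R"
    unfolding linear_HSS_concat_def
  proof (intro conjI)
    show "linear_share k (N - 1) a (cnf_share N e)" by (rule cnf_share_linear)
    show "t_private k t (N - 1) a (cnf_share N e)" using cnf_share_private[OF e] \<open>t < k\<close> by simp
    show "hss_concat_correct l k b (N - 1) a (cnf_share N e) (cnf_eval l N e sol) R"
      by (rule cnf_share_correct[OF sol \<open>0 < N\<close> a])
  qed
  then show ?thesis
    using e a upload_cost_cnf[OF e a] by blast
qed

lemma code_exists_iff_erasure_independent: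
  assumes "0 < b * k"
  shows "(\<exists>C :: (nat \<Rightarrow> nat \<Rightarrow> 'f::field) set. linear_code k b C \<and>
            code_rate k b C \<ge> real l / real (k * b) \<and> code_dist_ge k C (t + 1))
      \<longleftrightarrow> (\<exists>R :: nat \<Rightarrow> nat \<Rightarrow> nat \<Rightarrow> 'f. erasure_independent l k t b R)"
proof
  assume "\<exists>C :: (nat \<Rightarrow> nat \<Rightarrow> 'f) set. linear_code k b C \<and>
            code_rate k b C \<ge> real l / real (k * b) \<and> code_dist_ge k C (t + 1)"
  then obtain C :: "(nat \<Rightarrow> nat \<Rightarrow> 'f) set"
    where "linear_code k b C" "code_dist_ge k C (t + 1)" "code_rate k b C \<ge> real l / real (k * b)"
    by blast
  then show "\<exists>R :: nat \<Rightarrow> nat \<Rightarrow> nat \<Rightarrow> 'f. erasure_independent l k t b R"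
    using linear_code_imp_erasure_independent code_rate_ge_imp_dim_ge[OF assms] by blast
next
  assume "\<exists>R :: nat \<Rightarrow> nat \<Rightarrow> nat \<Rightarrow> 'f. erasure_independent l k t b R"
  then obtain C :: "(nat \<Rightarrow> nat \<Rightarrow> 'f) set"
    where "linear_code k b C" "code_dim C = l" "code_dist_ge k C (t + 1)"
    using erasure_independent_imp_code by blast
  then show "\<exists>C :: (nat \<Rightarrow> nat \<Rightarrow> 'f) set. linear_code k b C \<and>
            code_rate k b C \<ge> real l / real (k * b) \<and> code_dist_ge k C (t + 1)"
    by (auto simp: code_rate_def mult.commute)
qed

lemma hss_exists_iff_erasure_independent:
  assumes "0 < l"
  shows "(\<exists>nr a (sh :: nat \<Rightarrow> 'f::{field,finite} \<Rightarrow> (nat \<Rightarrow> 'f) \<Rightarrow> nat \<Rightarrow> 'f) ev R.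
            linear_HSS_concat l k t b nr a sh ev R)
      \<longleftrightarrow> (\<exists>R :: nat \<Rightarrow> nat \<Rightarrow> nat \<Rightarrow> 'f. erasure_independent l k t b R)"
proof
  assume "\<exists>nr a (sh :: nat \<Rightarrow> 'f \<Rightarrow> (nat \<Rightarrow> 'f) \<Rightarrow> nat \<Rightarrow> 'f) ev R.
            linear_HSS_concat l k t b nr a sh ev R"
  then show "\<exists>R :: nat \<Rightarrow> nat \<Rightarrow> nat \<Rightarrow> 'f. erasure_independent l k t b R"
    unfolding linear_HSS_concat_def using hss_imp_erasure_independent by blast
next
  assume "\<exists>R :: nat \<Rightarrow> nat \<Rightarrow> nat \<Rightarrow> 'f. erasure_independent l k t b R"
  then obtain R :: "nat \<Rightarrow> nat \<Rightarrow> nat \<Rightarrow> 'f" where "erasure_independent l k t b R" ..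
  then show "\<exists>nr a (sh :: nat \<Rightarrow> 'f \<Rightarrow> (nat \<Rightarrow> 'f) \<Rightarrow> nat \<Rightarrow> 'f) ev R.
            linear_HSS_concat l k t b nr a sh ev R"
    using erasure_independent_imp_cnf_hss[OF _ assms] by blast
qed

theorem mainTheorem3:
  fixes l k t b :: nat
  assumes "0 < l" and "0 < k" and "0 < t"
    and "real b > real l / real k"
  shows "((\<exists>nr a (sh :: nat \<Rightarrow> 'f::{field,finite} \<Rightarrow> (nat \<Rightarrow> 'f) \<Rightarrow> nat \<Rightarrow> 'f) ev R.
              linear_HSS_concat l k t b nr a sh ev R)
          \<longleftrightarrow> (\<exists>C :: (nat \<Rightarrow> nat \<Rightarrow> 'f) set. linear_code k b C \<and>
                  code_rate k b C \<ge> real l / real (k * b) \<and> code_dist_ge k C (t + 1)))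
       \<and> ((\<exists>C :: (nat \<Rightarrow> nat \<Rightarrow> 'f) set. linear_code k b C \<and>
                  code_rate k b C \<ge> real l / real (k * b) \<and> code_dist_ge k C (t + 1))
          \<longrightarrow> (\<exists>N e a ev (R :: nat \<Rightarrow> nat \<Rightarrow> nat \<Rightarrow> 'f).
                 bij_betw e {0..<N} {T. T \<subseteq> {..<k} \<and> card T = t}
               \<and> (\<forall>j<k. a j = length (cnf_idx N e j))
               \<and> linear_HSS_concat l k t b (N - 1) a (cnf_share N e) ev R
               \<and> upload_cost TYPE('f) l k a
                   = real k * real l * real ((k - 1) choose t) * log 2 (real CARD('f))))"
proof -
  have "0 < real l / real k" using assms(1,2) by simp
  then have "0 < b * k" using assms(2,4) by simp
  note code_iff = code_exists_iff_erasure_independent[OF \<open>0 < b * k\<close>, where 'f='f and l=l and t=t]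
  note hss_iff = hss_exists_iff_erasure_independent[OF assms(1), where 'f='f and k=k and t=t and b=b]
  show ?thesis
    unfolding code_iff hss_iff using erasure_independent_imp_cnf_hss[OF _ assms(1)] by blast
qed

end
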